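(* Let $k>0$ and $\mu<0$ be constants, and let $m_1,m_2$ be locally Lipschitz functions on an interval $[0,\tau)$ with $m_1\le m_2$, $m_2(0)\ge 0$, satisfying for a.e. $t\in(0,\tau)$ \[ m_1'(t)\le \mu m_1(t)^2+k\,(m_2(t)-m_1(t)),\qquad m_2'(t)\le \mu m_2(t)^2+k\,(m_2(t)-m_1(t)). \] If $m_1(0)\le \frac{2k}{\mu}-m_2(0)$, then $m(t):=m_1(t)-\frac{k}{\mu}$ satisfies $m(0)<0$ and \[ m(t)\le \frac{m(0)}{1-m(0)\mu t} \] for all $t\in[0,\tau)$ with $t<\frac{1}{m(0)\mu}$; in particular $m(t)\to-\infty$ as $t\to\frac{1}{m(0)\mu}$ (so that $\tau\le \frac{1}{m(0)\mu}$ if $m_1$ stays finite on $[0,\tau)$).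
   Context: In the paper $m_1(t)=\inf_x u_x(t,x)$, $m_2(t)=\sup_x u_x(t,x)$ and $k=K(0)$; the lemma is stated here as a self-contained statement about the differential inequalities. *)

theory Defs
  imports "HOL-Analysis.Analysis"
begin

definition locally_lipschitz_on :: "real set \<Rightarrow> (real \<Rightarrow> real) \<Rightarrow> bool" where
  "locally_lipschitz_on I f \<longleftrightarrow>
     (\<forall>x\<in>I. \<exists>e>0. \<exists>L. L-lipschitz_on (cball x e \<inter> I) f)"

end

theory Submission
  imports Defs
begin

text \<open>Adding the two differential inequalities and using \<open>\<mu> (m1 - 2k/\<mu>)\<^sup>2 \<le> 0\<close> gives
  \<open>(m1 + m2)' \<le> 2k (m1 + m2 - 2k/\<mu>)\<close>, so \<open>m1 + m2 \<le> 2k/\<mu>\<close> persists from \<open>t = 0\<close>.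
  With this, \<open>m = m1 - k/\<mu>\<close> satisfies \<open>m' < \<mu> m\<^sup>2\<close>; hence \<open>m\<close> stays below \<open>m 0 < 0\<close> and
  \<open>1/m 0 - \<mu> t \<le> 1/m t\<close>, which is the claimed bound and forces blow-up at \<open>1/(m 0 \<mu>)\<close>.
  The differential inequalities hold only almost everywhere; they are integrated by a comparison
  principle for continuous functions that are Lipschitz on the exceptional null set, whose image
  is then null as well.\<close>

text \<open>Lipschitz estimates relative to the base point only: weaker than \<open>locally_lipschitz_on\<close>,
  but exactly what is needed for images of null sets, and easily propagated through sums,
  products and compositions.\<close>
definition pointwise_lipschitz_on :: "real set \<Rightarrow> (real \<Rightarrow> real) \<Rightarrow> bool" where
  "pointwise_lipschitz_on S f \<longleftrightarrow>
     (\<forall>x\<in>S. \<exists>e>0. \<exists>B. \<forall>y\<in>S. \<bar>y - x\<bar> < e \<longrightarrow> \<bar>f y - f x\<bar> \<le> B * \<bar>y - x\<bar>)"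

lemma pointwise_lipschitz_onE:
  assumes "pointwise_lipschitz_on S f" "x \<in> S"
  obtains e B where "e > 0" "B \<ge> 0"
    "\<And>y. y \<in> S \<Longrightarrow> \<bar>y - x\<bar> < e \<Longrightarrow> \<bar>f y - f x\<bar> \<le> B * \<bar>y - x\<bar>"
proof -
  obtain e B where "e > 0" and B: "\<forall>y\<in>S. \<bar>y - x\<bar> < e \<longrightarrow> \<bar>f y - f x\<bar> \<le> B * \<bar>y - x\<bar>"
    using assms unfolding pointwise_lipschitz_on_def by blast
  moreover have "B * \<bar>y - x\<bar> \<le> \<bar>B\<bar> * \<bar>y - x\<bar>" for y
    by (simp add: mult_right_mono)
  ultimately show ?thesis
    using that[of e "\<bar>B\<bar>"] by (meson abs_ge_zero order_trans)
qed

lemma pointwise_lipschitz_on_subset: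
  "pointwise_lipschitz_on S f \<Longrightarrow> T \<subseteq> S \<Longrightarrow> pointwise_lipschitz_on T f"
  unfolding pointwise_lipschitz_on_def by (meson subsetD)

lemma pointwise_lipschitz_on_if_locally_lipschitz_on:
  assumes "locally_lipschitz_on S f"
  shows "pointwise_lipschitz_on S f"
  unfolding pointwise_lipschitz_on_def
proof
  fix x assume x: "x \<in> S"
  then obtain e L where "e > 0" and L: "L-lipschitz_on (cball x e \<inter> S) f"
    using assms unfolding locally_lipschitz_on_def by blast
  moreover have "\<bar>f y - f x\<bar> \<le> L * \<bar>y - x\<bar>" if "y \<in> S" "\<bar>y - x\<bar> < e" for y
    using lipschitz_onD[OF L, of y x] that x \<open>e > 0\<close> by (simp add: dist_real_def)
  ultimately show "\<exists>e>0. \<exists>B. \<forall>y\<in>S. \<bar>y - x\<bar> < e \<longrightarrow> \<bar>f y - f x\<bar> \<le> B * \<bar>y - x\<bar>"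
    by blast
qed

lemma lipschitz_near_if_has_derivative:
  fixes h :: "real \<Rightarrow> real"
  assumes "(h has_real_derivative D) (at x)"
  obtains e where "e > 0" "\<And>y. \<bar>y - x\<bar> < e \<Longrightarrow> \<bar>h y - h x\<bar> \<le> (\<bar>D\<bar> + 1) * \<bar>y - x\<bar>"
proof -
  have "((\<lambda>y. (h y - h x) / (y - x)) \<longlongrightarrow> D) (at x)"
    using assms by (simp add: has_field_derivative_iff)
  then have "eventually (\<lambda>y. dist ((h y - h x) / (y - x)) D < 1) (at x)"
    by (rule tendstoD) simp
  then obtain e where "e > 0"
    and e: "\<And>y. y \<noteq> x \<Longrightarrow> dist y x < e \<Longrightarrow> dist ((h y - h x) / (y - x)) D < 1"
    unfolding eventually_at by blast
  have "\<bar>h y - h x\<bar> \<le> (\<bar>D\<bar> + 1) * \<bar>y - x\<bar>" if "\<bar>y - x\<bar> < e" for y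
  proof (cases "y = x")
    case False
    then have "\<bar>(h y - h x) / (y - x) - D\<bar> < 1"
      using e[of y] that by (simp add: dist_real_def)
    then have "\<bar>(h y - h x) / (y - x)\<bar> \<le> \<bar>D\<bar> + 1"
      by linarith
    moreover have "\<bar>h y - h x\<bar> = \<bar>(h y - h x) / (y - x)\<bar> * \<bar>y - x\<bar>"
      using False by simp
    ultimately show ?thesis
      by (metis abs_ge_zero mult_right_mono)
  qed simp
  with \<open>e > 0\<close> show ?thesis using that by blast
qed

lemma pointwise_lipschitz_on_ident: "pointwise_lipschitz_on S (\<lambda>x. x)"
  unfolding pointwise_lipschitz_on_def by (auto intro!: exI[of _ 1])

lemma pointwise_lipschitz_on_compose:
  assumes u: "pointwise_lipschitz_on S u"
    and \<phi>: "\<And>x. x \<in> S \<Longrightarrow> \<phi> differentiable (at (u x))"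
  shows "pointwise_lipschitz_on S (\<lambda>x. \<phi> (u x))"
  unfolding pointwise_lipschitz_on_def
proof
  fix x assume x: "x \<in> S"
  obtain e B where "e > 0" "B \<ge> 0"
    and B: "\<And>y. y \<in> S \<Longrightarrow> \<bar>y - x\<bar> < e \<Longrightarrow> \<bar>u y - u x\<bar> \<le> B * \<bar>y - x\<bar>"
    using pointwise_lipschitz_onE[OF u x] by blast
  obtain D where "(\<phi> has_real_derivative D) (at (u x))"
    using \<phi>[OF x] by (auto simp: real_differentiable_def)
  then obtain d where "d > 0"
    and d: "\<And>z. \<bar>z - u x\<bar> < d \<Longrightarrow> \<bar>\<phi> z - \<phi> (u x)\<bar> \<le> (\<bar>D\<bar> + 1) * \<bar>z - u x\<bar>"
    using lipschitz_near_if_has_derivative by metis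
  have "\<bar>\<phi> (u y) - \<phi> (u x)\<bar> \<le> ((\<bar>D\<bar> + 1) * B) * \<bar>y - x\<bar>"
    if y: "y \<in> S" "\<bar>y - x\<bar> < min e (d / (B + 1))" for y
  proof -
    have "B * \<bar>y - x\<bar> \<le> B * (d / (B + 1))"
      using y \<open>B \<ge> 0\<close> by (intro mult_left_mono) auto
    also have "\<dots> < d"
      using \<open>B \<ge> 0\<close> \<open>d > 0\<close> by (simp add: field_simps)
    finally have "\<bar>u y - u x\<bar> < d" using B[OF y(1)] y(2) by fastforce
    then have "\<bar>\<phi> (u y) - \<phi> (u x)\<bar> \<le> (\<bar>D\<bar> + 1) * \<bar>u y - u x\<bar>" by (rule d)
    also have "\<dots> \<le> (\<bar>D\<bar> + 1) * (B * \<bar>y - x\<bar>)"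
      using B[OF y(1)] y(2) by (intro mult_left_mono) auto
    finally show ?thesis by (simp add: mult.assoc)
  qed
  moreover have "min e (d / (B + 1)) > 0" using \<open>e > 0\<close> \<open>d > 0\<close> \<open>B \<ge> 0\<close> by simp
  ultimately show "\<exists>e>0. \<exists>B. \<forall>y\<in>S. \<bar>y - x\<bar> < e \<longrightarrow> \<bar>\<phi> (u y) - \<phi> (u x)\<bar> \<le> B * \<bar>y - x\<bar>"
    by blast
qed

lemma pointwise_lipschitz_on_differentiable:
  "(\<And>x. x \<in> S \<Longrightarrow> h differentiable (at x)) \<Longrightarrow> pointwise_lipschitz_on S h"
  using pointwise_lipschitz_on_compose[OF pointwise_lipschitz_on_ident] .

lemma pointwise_lipschitz_on_add:
  assumes u: "pointwise_lipschitz_on S u" and v: "pointwise_lipschitz_on S v"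
  shows "pointwise_lipschitz_on S (\<lambda>x. u x + v x)"
  unfolding pointwise_lipschitz_on_def
proof
  fix x assume x: "x \<in> S"
  obtain e1 B1 where "e1 > 0"
    and B1: "\<And>y. y \<in> S \<Longrightarrow> \<bar>y - x\<bar> < e1 \<Longrightarrow> \<bar>u y - u x\<bar> \<le> B1 * \<bar>y - x\<bar>"
    using pointwise_lipschitz_onE[OF u x] by blast
  obtain e2 B2 where "e2 > 0"
    and B2: "\<And>y. y \<in> S \<Longrightarrow> \<bar>y - x\<bar> < e2 \<Longrightarrow> \<bar>v y - v x\<bar> \<le> B2 * \<bar>y - x\<bar>"
    using pointwise_lipschitz_onE[OF v x] by blast
  have "\<bar>(u y + v y) - (u x + v x)\<bar> \<le> (B1 + B2) * \<bar>y - x\<bar>"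
    if "y \<in> S" "\<bar>y - x\<bar> < min e1 e2" for y
    using B1[of y] B2[of y] that by (simp add: distrib_right abs_triangle_ineq4)
  moreover have "min e1 e2 > 0" using \<open>e1 > 0\<close> \<open>e2 > 0\<close> by simp
  ultimately show "\<exists>e>0. \<exists>B. \<forall>y\<in>S. \<bar>y - x\<bar> < e \<longrightarrow> \<bar>(u y + v y) - (u x + v x)\<bar> \<le> B * \<bar>y - x\<bar>"
    by blast
qed

lemma pointwise_lipschitz_on_diff:
  assumes "pointwise_lipschitz_on S u" "pointwise_lipschitz_on S v"
  shows "pointwise_lipschitz_on S (\<lambda>x. u x - v x)"
  using pointwise_lipschitz_on_add[OF assms(1) pointwise_lipschitz_on_compose[OF assms(2), of uminus]]
  by simp

lemma pointwise_lipschitz_on_mult: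
  assumes u: "pointwise_lipschitz_on S u" and v: "pointwise_lipschitz_on S v"
  shows "pointwise_lipschitz_on S (\<lambda>x. u x * v x)"
  unfolding pointwise_lipschitz_on_def
proof
  fix x assume x: "x \<in> S"
  obtain e1 B1 where "e1 > 0" "B1 \<ge> 0"
    and B1: "\<And>y. y \<in> S \<Longrightarrow> \<bar>y - x\<bar> < e1 \<Longrightarrow> \<bar>u y - u x\<bar> \<le> B1 * \<bar>y - x\<bar>"
    using pointwise_lipschitz_onE[OF u x] by blast
  obtain e2 B2 where "e2 > 0" "B2 \<ge> 0"
    and B2: "\<And>y. y \<in> S \<Longrightarrow> \<bar>y - x\<bar> < e2 \<Longrightarrow> \<bar>v y - v x\<bar> \<le> B2 * \<bar>y - x\<bar>"
    using pointwise_lipschitz_onE[OF v x] by blast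
  define B where "B = (\<bar>u x\<bar> + B1) * B2 + \<bar>v x\<bar> * B1"
  have "\<bar>u y * v y - u x * v x\<bar> \<le> B * \<bar>y - x\<bar>"
    if y: "y \<in> S" "\<bar>y - x\<bar> < min 1 (min e1 e2)" for y
  proof -
    have du: "\<bar>u y - u x\<bar> \<le> B1 * \<bar>y - x\<bar>" and dv: "\<bar>v y - v x\<bar> \<le> B2 * \<bar>y - x\<bar>"
      using B1 B2 y by auto
    have "B1 * \<bar>y - x\<bar> \<le> B1" using y \<open>B1 \<ge> 0\<close> by (simp add: mult_left_le)
    then have uy: "\<bar>u y\<bar> \<le> \<bar>u x\<bar> + B1" using du by linarith
    have "\<bar>u y * v y - u x * v x\<bar> = \<bar>u y * (v y - v x) + v x * (u y - u x)\<bar>"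
      by (simp add: algebra_simps)
    also have "\<dots> \<le> \<bar>u y\<bar> * \<bar>v y - v x\<bar> + \<bar>v x\<bar> * \<bar>u y - u x\<bar>"
      by (metis abs_mult abs_triangle_ineq)
    also have "\<dots> \<le> (\<bar>u x\<bar> + B1) * (B2 * \<bar>y - x\<bar>) + \<bar>v x\<bar> * (B1 * \<bar>y - x\<bar>)"
      using uy du dv by (intro add_mono mult_mono mult_left_mono) auto
    also have "\<dots> = B * \<bar>y - x\<bar>" by (simp add: B_def algebra_simps)
    finally show ?thesis .
  qed
  moreover have "min 1 (min e1 e2) > 0" using \<open>e1 > 0\<close> \<open>e2 > 0\<close> by simp
  ultimately show "\<exists>e>0. \<exists>B. \<forall>y\<in>S. \<bar>y - x\<bar> < e \<longrightarrow> \<bar>u y * v y - u x * v x\<bar> \<le> B * \<bar>y - x\<bar>"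
    by blast
qed

lemma continuous_on_if_pointwise_lipschitz_on:
  assumes "pointwise_lipschitz_on S f"
  shows "continuous_on S f"
  unfolding continuous_on_iff
proof (intro ballI allI impI)
  fix x and \<epsilon> :: real assume x: "x \<in> S" and "\<epsilon> > 0"
  obtain e B where "e > 0" "B \<ge> 0"
    and B: "\<And>y. y \<in> S \<Longrightarrow> \<bar>y - x\<bar> < e \<Longrightarrow> \<bar>f y - f x\<bar> \<le> B * \<bar>y - x\<bar>"
    using pointwise_lipschitz_onE[OF assms x] by blast
  have "dist (f y) (f x) < \<epsilon>" if "y \<in> S" "dist y x < min e (\<epsilon> / (B + 1))" for y
  proof -
    have "\<bar>f y - f x\<bar> \<le> (B + 1) * \<bar>y - x\<bar>"
      using B[of y] that by (simp add: dist_real_def distrib_right)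
    also have "\<dots> < \<epsilon>"
      using that \<open>B \<ge> 0\<close> by (simp add: dist_real_def field_simps)
    finally show ?thesis by (simp add: dist_real_def)
  qed
  moreover have "min e (\<epsilon> / (B + 1)) > 0" using \<open>e > 0\<close> \<open>\<epsilon> > 0\<close> \<open>B \<ge> 0\<close> by simp
  ultimately show "\<exists>d>0. \<forall>y\<in>S. dist y x < d \<longrightarrow> dist (f y) (f x) < \<epsilon>"
    by blast
qed

lemma negligible_image_if_pointwise_lipschitz_on:
  assumes "pointwise_lipschitz_on S f" "negligible S"
  shows "negligible (f ` S)"
proof (rule negligible_locally_Lipschitz_image)
  fix x assume "x \<in> S"
  then obtain e B where "e > 0"
    and B: "\<And>y. y \<in> S \<Longrightarrow> \<bar>y - x\<bar> < e \<Longrightarrow> \<bar>f y - f x\<bar> \<le> B * \<bar>y - x\<bar>"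
    using pointwise_lipschitz_onE[OF assms(1)] by blast
  then show "\<exists>T B. open T \<and> x \<in> T \<and> (\<forall>y\<in>S \<inter> T. norm (f y - f x) \<le> B * norm (y - x))"
    by (intro exI[of _ "ball x e"] exI[of _ B]) (auto simp: dist_real_def abs_minus_commute)
qed (use assms in auto)

text \<open>Pick a level \<open>y \<in> (0, g b)\<close> that \<open>g\<close> does not take on the null set \<open>g ` N\<close>. At the last
  time \<open>c\<close> with \<open>g c = y\<close> the derivative is negative, so \<open>g\<close> drops below \<open>y\<close> right after \<open>c\<close>
  and has to cross \<open>y\<close> again before \<open>b\<close>.\<close>
lemma nonpos_if_derivative_neg_where_pos:
  fixes g :: "real \<Rightarrow> real"
  assumes "a \<le> b" and cont: "continuous_on {a..b} g"
    and "negligible N" and "pointwise_lipschitz_on N g"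
    and "g a \<le> 0"
    and deriv: "\<And>x. a < x \<Longrightarrow> x < b \<Longrightarrow> x \<notin> N \<Longrightarrow> g x > 0 \<Longrightarrow>
                  \<exists>D. (g has_real_derivative D) (at x) \<and> D < 0"
  shows "g b \<le> 0"
proof (rule ccontr)
  assume "\<not> g b \<le> 0"
  then have "g b > 0" by simp
  have "negligible (g ` N)"
    using negligible_image_if_pointwise_lipschitz_on assms(3,4) by blast
  moreover have "\<not> negligible {0<..<g b}"
    using \<open>g b > 0\<close> by (intro open_not_negligible) auto
  ultimately have "\<not> {0<..<g b} \<subseteq> g ` N" using negligible_subset by blast
  then obtain y where y: "0 < y" "y < g b" "y \<notin> g ` N"
    by (meson greaterThanLessThan_iff subsetI)
  define S where "S = {a..b} \<inter> g -` {y}"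
  have "S \<noteq> {}" using IVT'[of g a y b] assms(1,5) y cont by (auto simp: S_def)
  moreover have bdd: "bdd_above S" unfolding S_def by (rule bdd_above_Int1) simp
  moreover have "closed S"
    unfolding S_def by (rule continuous_closed_preimage[OF cont]) auto
  ultimately have "Sup S \<in> S" by (rule closed_contains_Sup)
  define c where "c = Sup S"
  have gc: "g c = y" and "a \<le> c" "c \<le> b" using \<open>Sup S \<in> S\<close> by (auto simp: S_def c_def)
  with y assms(5) have c: "a < c" "c < b" "c \<notin> N" by (auto simp: order.order_iff_strict)
  obtain D where "(g has_real_derivative D) (at c)" "D < 0"
    using deriv[OF c] gc y by auto
  then obtain d where "d > 0" and d: "\<And>h. h > 0 \<Longrightarrow> h < d \<Longrightarrow> g (c + h) < g c"
    using DERIV_neg_dec_right by blast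
  define h where "h = min (d / 2) ((b - c) / 2)"
  have "0 < h" "h < d" "h < b - c" using \<open>d > 0\<close> c unfolding h_def min_def by auto
  define x where "x = c + h"
  have x: "c < x" "x < b" and "g x < y"
    using d[of h] \<open>0 < h\<close> \<open>h < d\<close> \<open>h < b - c\<close> gc by (auto simp: x_def)
  moreover have "continuous_on {x..b} g"
    using x c by (intro continuous_on_subset[OF cont]) auto
  ultimately obtain z where "x \<le> z" "z \<le> b" "g z = y"
    using IVT'[of g x y b] y by auto
  with x c have "z \<in> S" by (auto simp: S_def)
  then have "z \<le> c" unfolding c_def using bdd by (rule cSup_upper)
  with \<open>x \<le> z\<close> x show False by simp
qed

lemma riccati_sum_rhs_le:
  fixes k \<mu> a b :: real
  assumes "\<mu> < 0"
  shows "(\<mu> * a\<^sup>2 + k * (b - a)) + (\<mu> * b\<^sup>2 + k * (b - a)) \<le> 2 * k * (a + b - 2 * k / \<mu>)"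
proof -
  have "\<mu> * (a - 2 * k / \<mu>)\<^sup>2 \<le> 0" "\<mu> * b\<^sup>2 \<le> 0"
    using assms by (simp_all add: mult_nonpos_nonneg)
  moreover have "\<mu> * (a - 2 * k / \<mu>)\<^sup>2 = \<mu> * a\<^sup>2 - 4 * k * a + 4 * k * k / \<mu>"
    using assms by (simp add: power2_eq_square field_simps)
  ultimately show ?thesis by (simp add: algebra_simps)
qed

lemma riccati_rhs_less:
  fixes k \<mu> a b :: real
  assumes "k > 0" "\<mu> < 0" "a + b \<le> 2 * k / \<mu>"
  shows "\<mu> * a\<^sup>2 + k * (b - a) < \<mu> * (a - k / \<mu>)\<^sup>2"
proof -
  have "\<mu> * a\<^sup>2 + k * (b - a) = \<mu> * (a - k / \<mu>)\<^sup>2 + k * (a + b) - k * k / \<mu>"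
    using assms(2) by (simp add: power2_eq_square field_simps)
  moreover have "k * (a + b) \<le> k * (2 * k / \<mu>)"
    using mult_left_mono[OF assms(3), of k] assms(1) by simp
  moreover have "k * (2 * k / \<mu>) = 2 * (k * k / \<mu>)" by simp
  moreover have "k * k / \<mu> < 0"
    using assms(1,2) by (simp add: divide_pos_neg)
  ultimately show ?thesis by linarith
qed

locale riccati_inequalities =
  fixes k \<mu> :: real and \<tau> :: ereal and m1 m2 :: "real \<Rightarrow> real"
  assumes k_pos: "k > 0" and mu_neg: "\<mu> < 0" and tau_pos: "\<tau> > 0"
    and lip1: "locally_lipschitz_on {t. 0 \<le> t \<and> ereal t < \<tau>} m1"
    and lip2: "locally_lipschitz_on {t. 0 \<le> t \<and> ereal t < \<tau>} m2"
    and m20: "m2 0 \<ge> 0"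
    and ode1: "AE t in lebesgue. 0 < t \<and> ereal t < \<tau> \<longrightarrow>
                 (\<exists>D. (m1 has_real_derivative D) (at t) \<and>
                      D \<le> \<mu> * (m1 t)\<^sup>2 + k * (m2 t - m1 t))"
    and ode2: "AE t in lebesgue. 0 < t \<and> ereal t < \<tau> \<longrightarrow>
                 (\<exists>D. (m2 has_real_derivative D) (at t) \<and>
                      D \<le> \<mu> * (m2 t)\<^sup>2 + k * (m2 t - m1 t))"
    and init: "m1 0 \<le> 2 * k / \<mu> - m2 0"
begin

definition I :: "real set" where "I = {t. 0 \<le> t \<and> ereal t < \<tau>}"

definition m :: "real \<Rightarrow> real" where "m t = m1 t - k / \<mu>"

definition T :: real where "T = 1 / (m 0 * \<mu>)"

lemma zero_mem_I: "0 \<in> I"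
  using tau_pos by (simp add: I_def zero_ereal_def)

lemma atLeastAtMost_subset_I: "t \<in> I \<Longrightarrow> {0..t} \<subseteq> I"
  by (auto simp: I_def intro: le_less_trans[of "ereal _" "ereal t"])

lemma pointwise_lipschitz_on_m1: "pointwise_lipschitz_on I m1"
  using lip1 unfolding I_def by (rule pointwise_lipschitz_on_if_locally_lipschitz_on)

lemma pointwise_lipschitz_on_m2: "pointwise_lipschitz_on I m2"
  using lip2 unfolding I_def by (rule pointwise_lipschitz_on_if_locally_lipschitz_on)

lemma nonpos_on_I_by_derivative:
  assumes lip: "pointwise_lipschitz_on I g" and "g 0 \<le> 0" and "t \<in> I"
    and deriv: "\<And>x D1 D2. 0 < x \<Longrightarrow> x \<in> I \<Longrightarrow> 0 < g x \<Longrightarrow>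
        (m1 has_real_derivative D1) (at x) \<Longrightarrow> D1 \<le> \<mu> * (m1 x)\<^sup>2 + k * (m2 x - m1 x) \<Longrightarrow>
        (m2 has_real_derivative D2) (at x) \<Longrightarrow> D2 \<le> \<mu> * (m2 x)\<^sup>2 + k * (m2 x - m1 x) \<Longrightarrow>
        \<exists>D. (g has_real_derivative D) (at x) \<and> D < 0"
  shows "g t \<le> 0"
proof -
  obtain N1 where "negligible N1" and N1: "{x. \<not> (0 < x \<and> ereal x < \<tau> \<longrightarrow>
      (\<exists>D. (m1 has_real_derivative D) (at x) \<and> D \<le> \<mu> * (m1 x)\<^sup>2 + k * (m2 x - m1 x)))} \<subseteq> N1"
    using ode1 unfolding eventually_ae_filter_negligible by blast
  obtain N2 where "negligible N2" and N2: "{x. \<not> (0 < x \<and> ereal x < \<tau> \<longrightarrow>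
      (\<exists>D. (m2 has_real_derivative D) (at x) \<and> D \<le> \<mu> * (m2 x)\<^sup>2 + k * (m2 x - m1 x)))} \<subseteq> N2"
    using ode2 unfolding eventually_ae_filter_negligible by blast
  define N where "N = (N1 \<union> N2) \<inter> I"
  show ?thesis
  proof (rule nonpos_if_derivative_neg_where_pos[of 0 t g N])
    show "0 \<le> t" using \<open>t \<in> I\<close> by (simp add: I_def)
    show "continuous_on {0..t} g"
      using continuous_on_if_pointwise_lipschitz_on[OF lip] atLeastAtMost_subset_I[OF \<open>t \<in> I\<close>]
      by (rule continuous_on_subset)
    show "negligible N"
      unfolding N_def using \<open>negligible N1\<close> \<open>negligible N2\<close> by (intro negligible_Int) auto
    show "pointwise_lipschitz_on N g"
      using lip by (rule pointwise_lipschitz_on_subset) (auto simp: N_def)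
  next
    fix x assume x: "0 < x" "x < t" "x \<notin> N" "0 < g x"
    then have "x \<in> I" using atLeastAtMost_subset_I[OF \<open>t \<in> I\<close>] by auto
    with x have "x \<notin> N1" "x \<notin> N2" "ereal x < \<tau>" by (auto simp: N_def I_def)
    with N1 N2 \<open>0 < x\<close> obtain D1 D2 where
      "(m1 has_real_derivative D1) (at x)" "D1 \<le> \<mu> * (m1 x)\<^sup>2 + k * (m2 x - m1 x)"
      "(m2 has_real_derivative D2) (at x)" "D2 \<le> \<mu> * (m2 x)\<^sup>2 + k * (m2 x - m1 x)"
      by blast
    with deriv \<open>0 < x\<close> \<open>x \<in> I\<close> \<open>0 < g x\<close>
    show "\<exists>D. (g has_real_derivative D) (at x) \<and> D < 0" by blast
  qed fact
qed

text \<open>The excess over \<open>2k/\<mu>\<close>, damped by \<open>exp (-2kt)\<close> and tilted by the small slope \<open>\<epsilon>\<close>,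
  has a strictly negative derivative.\<close>
lemma m1_add_m2_le: "t \<in> I \<Longrightarrow> m1 t + m2 t \<le> 2 * k / \<mu>"
proof (rule ccontr)
  define c where "c = 2 * k / \<mu>"
  assume "t \<in> I" and "\<not> m1 t + m2 t \<le> 2 * k / \<mu>"
  then have excess: "m1 t + m2 t - c > 0" by (simp add: c_def)
  with init zero_mem_I \<open>t \<in> I\<close> have "t > 0" by (cases "t = 0") (auto simp: c_def I_def)
  define \<epsilon> where "\<epsilon> = (m1 t + m2 t - c) * exp (-(2 * k) * t) / (2 * t)"
  have "\<epsilon> > 0" using excess \<open>t > 0\<close> by (simp add: \<epsilon>_def)
  define g where "g x = (m1 x + m2 x - c) * exp (-(2 * k) * x) - \<epsilon> * x" for x
  have "g t \<le> 0"
  proof (rule nonpos_on_I_by_derivative[OF _ _ \<open>t \<in> I\<close>])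
    show "pointwise_lipschitz_on I g"
      unfolding g_def
      by (intro pointwise_lipschitz_on_diff pointwise_lipschitz_on_mult pointwise_lipschitz_on_add
          pointwise_lipschitz_on_m1 pointwise_lipschitz_on_m2 pointwise_lipschitz_on_differentiable)
        (auto simp: real_differentiable_def intro!: derivative_eq_intros)
    show "g 0 \<le> 0" using init by (simp add: g_def c_def)
  next
    fix x D1 D2
    assume "(m1 has_real_derivative D1) (at x)" "D1 \<le> \<mu> * (m1 x)\<^sup>2 + k * (m2 x - m1 x)"
      and "(m2 has_real_derivative D2) (at x)" "D2 \<le> \<mu> * (m2 x)\<^sup>2 + k * (m2 x - m1 x)"
    moreover note riccati_sum_rhs_le[OF mu_neg, where k=k and a="m1 x" and b="m2 x"]
    ultimately have "D1 + D2 \<le> 2 * k * (m1 x + m2 x - c)" unfolding c_def by linarith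
    then have "(D1 + D2) * exp (-(2 * k) * x) \<le> 2 * k * (m1 x + m2 x - c) * exp (-(2 * k) * x)"
      by (simp add: mult_right_mono)
    then have "(D1 + D2) * exp (-(2 * k) * x) + (m1 x + m2 x - c) * (exp (-(2 * k) * x) * (-(2 * k))) - \<epsilon> < 0"
      using \<open>\<epsilon> > 0\<close> by (simp add: algebra_simps)
    moreover have "(g has_real_derivative
        (D1 + D2) * exp (-(2 * k) * x) + (m1 x + m2 x - c) * (exp (-(2 * k) * x) * (-(2 * k))) - \<epsilon>) (at x)"
      unfolding g_def by (auto intro!: derivative_eq_intros \<open>(m1 has_real_derivative D1) (at x)\<close>
          \<open>(m2 has_real_derivative D2) (at x)\<close>)
    ultimately show "\<exists>D. (g has_real_derivative D) (at x) \<and> D < 0" by blast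
  qed
  moreover have "g t = (m1 t + m2 t - c) * exp (-(2 * k) * t) / 2"
    using \<open>t > 0\<close> by (simp add: g_def \<epsilon>_def field_simps)
  moreover have "(m1 t + m2 t - c) * exp (-(2 * k) * t) > 0" using excess by simp
  ultimately show False by linarith
qed

lemma m1_le_initial: "t \<in> I \<Longrightarrow> m1 t \<le> m1 0"
proof -
  assume "t \<in> I"
  have "m1 t - m1 0 \<le> 0"
  proof (rule nonpos_on_I_by_derivative[OF _ _ \<open>t \<in> I\<close>])
    show "pointwise_lipschitz_on I (\<lambda>x. m1 x - m1 0)"
      by (intro pointwise_lipschitz_on_diff pointwise_lipschitz_on_m1 pointwise_lipschitz_on_differentiable)
        simp
  next
    fix x D1 assume "x \<in> I" and D1: "(m1 has_real_derivative D1) (at x)"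
      "D1 \<le> \<mu> * (m1 x)\<^sup>2 + k * (m2 x - m1 x)"
    have "\<mu> * (m1 x - k / \<mu>)\<^sup>2 \<le> 0" using mu_neg by (simp add: mult_nonpos_nonneg)
    then have "D1 < 0"
      using D1(2) riccati_rhs_less[OF k_pos mu_neg m1_add_m2_le[OF \<open>x \<in> I\<close>]] by linarith
    moreover have "((\<lambda>x. m1 x - m1 0) has_real_derivative D1) (at x)"
      using D1(1) by (auto intro!: derivative_eq_intros)
    ultimately show "\<exists>D. ((\<lambda>x. m1 x - m1 0) has_real_derivative D) (at x) \<and> D < 0" by blast
  qed simp
  then show ?thesis by simp
qed

lemma m_initial_neg: "m 0 < 0"
proof -
  have "k / \<mu> < 0" using k_pos mu_neg by (simp add: divide_pos_neg)
  moreover have "2 * k / \<mu> = k / \<mu> + k / \<mu>" by simp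
  ultimately show ?thesis using init m20 by (simp add: m_def)
qed

lemma m_neg: "t \<in> I \<Longrightarrow> m t < 0"
  using m1_le_initial m_initial_neg by (fastforce simp: m_def)

lemma T_pos: "T > 0"
  using m_initial_neg mu_neg by (simp add: T_def mult_neg_neg)

lemma inverse_m_ge: "t \<in> I \<Longrightarrow> \<mu> * (T - t) \<le> 1 / m t"
proof -
  assume "t \<in> I"
  define g where "g x = \<mu> * (T - x) - 1 / m x" for x
  have "g t \<le> 0"
  proof (rule nonpos_on_I_by_derivative[OF _ _ \<open>t \<in> I\<close>])
    have "pointwise_lipschitz_on I m"
      unfolding m_def
      by (intro pointwise_lipschitz_on_diff pointwise_lipschitz_on_m1 pointwise_lipschitz_on_differentiable)
        simp
    then have "pointwise_lipschitz_on I (\<lambda>x. 1 / m x)"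
      by (rule pointwise_lipschitz_on_compose) (auto intro!: derivative_intros dest: m_neg)
    then show "pointwise_lipschitz_on I g"
      unfolding g_def
      by (intro pointwise_lipschitz_on_diff[OF pointwise_lipschitz_on_differentiable])
        (auto simp: real_differentiable_def intro!: derivative_eq_intros)
    show "g 0 \<le> 0"
      using m_initial_neg mu_neg by (simp add: g_def T_def)
  next
    fix x D1 assume "x \<in> I" and D1: "(m1 has_real_derivative D1) (at x)"
      "D1 \<le> \<mu> * (m1 x)\<^sup>2 + k * (m2 x - m1 x)"
    have "m x < 0" using m_neg[OF \<open>x \<in> I\<close>] .
    have "D1 < \<mu> * (m x)\<^sup>2"
      using D1(2) riccati_rhs_less[OF k_pos mu_neg m1_add_m2_le[OF \<open>x \<in> I\<close>]] by (simp add: m_def)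
    then have "- \<mu> + D1 / (m x)\<^sup>2 < 0"
      using \<open>m x < 0\<close> by (simp add: divide_less_eq)
    moreover have "(g has_real_derivative - \<mu> + D1 / (m x)\<^sup>2) (at x)"
      unfolding g_def m_def using \<open>m x < 0\<close>
      by (auto intro!: derivative_eq_intros D1(1) simp: m_def power2_eq_square)
    ultimately show "\<exists>D. (g has_real_derivative D) (at x) \<and> D < 0" by blast
  qed
  then show ?thesis by (simp add: g_def)
qed

lemma m_le_blowup_profile: "t \<in> I \<Longrightarrow> t < T \<Longrightarrow> m t \<le> 1 / (\<mu> * (T - t))"
proof -
  assume "t \<in> I" "t < T"
  then have "\<mu> * (T - t) < 0" using mu_neg by (simp add: mult_neg_pos)
  with inverse_m_ge[OF \<open>t \<in> I\<close>] m_neg[OF \<open>t \<in> I\<close>] show ?thesis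
    by (simp add: divide_le_eq neg_le_divide_eq mult.commute)
qed

lemma m_tendsto_bot: "ereal T \<le> \<tau> \<Longrightarrow> filterlim m at_bot (at_left T)"
proof -
  assume "ereal T \<le> \<tau>"
  have "eventually (\<lambda>t. t \<in> {0<..<T}) (at_left T)"
    using T_pos by (rule eventually_at_left_real)
  then have near: "eventually (\<lambda>t. t \<in> I \<and> t < T) (at_left T)"
    by eventually_elim (use \<open>ereal T \<le> \<tau>\<close> in \<open>auto simp: I_def intro: less_le_trans[of "ereal _" "ereal T"]\<close>)
  have "filterlim (\<lambda>t. inverse (\<mu> * (T - t))) at_bot (at_left T)"
  proof (rule filterlim_inverse_at_bot)
    show "((\<lambda>t. \<mu> * (T - t)) \<longlongrightarrow> 0) (at_left T)"
      by (auto intro!: tendsto_eq_intros)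
    show "eventually (\<lambda>t. \<mu> * (T - t) < 0) (at_left T)"
      using near by eventually_elim (use mu_neg in \<open>simp add: mult_neg_pos\<close>)
  qed
  moreover have "eventually (\<lambda>t. m t \<le> inverse (\<mu> * (T - t))) (at_left T)"
    using near by eventually_elim (simp add: m_le_blowup_profile inverse_eq_divide)
  ultimately show ?thesis
    unfolding filterlim_at_bot by (auto elim: eventually_elim2 intro: order_trans)
qed

lemma tau_le_T: "\<tau> \<le> ereal T"
proof (rule ccontr)
  assume "\<not> \<tau> \<le> ereal T"
  then have "T \<in> I" using T_pos by (auto simp: I_def)
  then have "continuous_on {0..T} m"
    unfolding m_def using continuous_on_if_pointwise_lipschitz_on[OF pointwise_lipschitz_on_m1]
    by (auto intro!: continuous_intros intro: continuous_on_subset[OF _ atLeastAtMost_subset_I])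
  then have "(m \<longlongrightarrow> m T) (at_left T)"
    using T_pos by (simp add: continuous_on_Icc_at_leftD)
  moreover have "filterlim m at_bot (at_left T)"
    using \<open>\<not> \<tau> \<le> ereal T\<close> by (intro m_tendsto_bot) simp
  ultimately show False
    by (meson not_tendsto_and_filterlim_at_infinity filterlim_mono at_bot_le_at_infinity
        order_refl trivial_limit_at_left_real)
qed

end

theorem lemma4p2:
  fixes k \<mu> :: real and \<tau> :: ereal and m1 m2 :: "real \<Rightarrow> real"
  assumes k_pos: "k > 0" and mu_neg: "\<mu> < 0" and tau_pos: "\<tau> > 0"
    and lip1: "locally_lipschitz_on {t. 0 \<le> t \<and> ereal t < \<tau>} m1"
    and lip2: "locally_lipschitz_on {t. 0 \<le> t \<and> ereal t < \<tau>} m2"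
    and le: "\<forall>t. 0 \<le> t \<and> ereal t < \<tau> \<longrightarrow> m1 t \<le> m2 t"
    and m20: "m2 0 \<ge> 0"
    and ode1: "AE t in lebesgue. 0 < t \<and> ereal t < \<tau> \<longrightarrow>
                 (\<exists>D. (m1 has_real_derivative D) (at t) \<and>
                      D \<le> \<mu> * (m1 t)\<^sup>2 + k * (m2 t - m1 t))"
    and ode2: "AE t in lebesgue. 0 < t \<and> ereal t < \<tau> \<longrightarrow>
                 (\<exists>D. (m2 has_real_derivative D) (at t) \<and>
                      D \<le> \<mu> * (m2 t)\<^sup>2 + k * (m2 t - m1 t))"
    and init: "m1 0 \<le> 2 * k / \<mu> - m2 0"
  shows "let m = (\<lambda>t. m1 t - k / \<mu>); T = 1 / (m 0 * \<mu>) in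
           m 0 < 0 \<and>
           (\<forall>t. 0 \<le> t \<and> ereal t < \<tau> \<and> t < T \<longrightarrow> m t \<le> m 0 / (1 - m 0 * \<mu> * t)) \<and>
           \<tau> \<le> ereal T \<and>
           (\<tau> = ereal T \<longrightarrow> filterlim m at_bot (at_left T))"
proof -
  interpret riccati_inequalities k \<mu> \<tau> m1 m2
    using k_pos mu_neg tau_pos lip1 lip2 m20 ode1 ode2 init by unfold_locales
  have bound: "m t \<le> m 0 / (1 - m 0 * \<mu> * t)" if "t \<in> I" "t < T" for t
  proof -
    have "\<mu> * (T - t) = (1 - m 0 * \<mu> * t) / m 0"
      using m_initial_neg mu_neg by (simp add: T_def field_simps)
    with m_le_blowup_profile[OF that] show ?thesis by simp
  qed
  have m_eq: "(\<lambda>t. m1 t - k / \<mu>) = m" by (simp add: fun_eq_iff m_def)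
  show ?thesis
    unfolding m_eq Let_def T_def[symmetric]
    using m_initial_neg bound tau_le_T m_tendsto_bot by (auto simp: I_def)
qed

end
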